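(* Let $f'$ and $f''$ be endofunctions of $[n']$ and $[n'']$ respectively. Then in $\mathbf{EFSym}$ $$R_{f'}R_{f''}=\sum_f R_f,$$ where the sum is over all endofunctions $f$ of $[n'+n'']$ such that $\mathrm{std}(f^{[n']})=f'$ and $\mathrm{std}(f^{[n'+n'']\setminus[n']})=f''$.
   Context: $\mathbf{EFSym}$: over $A=\{a_{ij}:i\ne j,\ i,j\ge1\}$ with $a_{ij}\prec a_{kl}$ iff $j=k$, for $f:[n]\to[n]$, $\mathbf S^f$ is the sum of words $w_1\cdots w_n$ over $A$ with $w_{f(j)}\prec w_j$ whenever $f(j)\ne j$; the $\mathbf S^f$ form a basis of $\mathbf{EFSym}$ with $\mathbf S^f\mathbf S^g=\mathbf S^{f\bullet g}$ (shifted concatenation: $i\mapsto f(i)$ for $i\le n$, $n+i\mapsto g(i)+n$). For $I\subseteq[n]$, $f^I:I\to I$ is $f^I(x)=f(x)$ if $f(x)\in I$ and $f^I(x)=x$ otherwise; $\mathrm{std}(f^I)=\tau_I\circ f^I\circ\tau_I^{-1}$ with $\tau_I:I\to[|I|]$ increasing. Partial order on endofunctions of $[n]$: the cover relation is $f<g$ iff there is $j$ with $f(j)\ne j$, $g(j)=j$ and $g(k)=f(k)$ for all $k\ne j$ (so $f\le g$ iff $g$ is obtained from $f$ by turning some non-fixed points into fixed points). $\mathrm{Fix}(f)$ is the number of fixed points of $f$, and $R_f=\sum_{g\le f}(-1)^{\mathrm{Fix}(f)-\mathrm{Fix}(g)}\mathbf S^g$. *)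

theory Defs
  imports "HOL-Library.FuncSet"
begin

definition letters :: "(nat \<times> nat) set" where
  "letters = {(i,j). i \<noteq> j \<and> 1 \<le> i \<and> 1 \<le> j}"

definition prec :: "nat \<times> nat \<Rightarrow> nat \<times> nat \<Rightarrow> bool" where
  "prec a b \<longleftrightarrow> snd a = fst b"

text \<open>Noncommutative formal power series over the alphabet, integer coefficients:
  coefficient functions on words (words containing non-letters get coefficient 0).\<close>
type_synonym series = "(nat \<times> nat) list \<Rightarrow> int"

definition ser_mult :: "series \<Rightarrow> series \<Rightarrow> series" where
  "ser_mult F G = (\<lambda>w. \<Sum>i\<le>length w. F (take i w) * G (drop i w))"

definition endo :: "nat \<Rightarrow> (nat \<Rightarrow> nat) set" where
  "endo n = {1..n} \<rightarrow>\<^sub>E {1..n}"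

definition S :: "nat \<Rightarrow> (nat \<Rightarrow> nat) \<Rightarrow> series" where
  "S n f = (\<lambda>w. if length w = n \<and> set w \<subseteq> letters \<and>
      (\<forall>j\<in>{1..n}. f j \<noteq> j \<longrightarrow> prec (w ! (f j - 1)) (w ! (j - 1))) then 1 else 0)"

definition cover :: "nat \<Rightarrow> (nat \<Rightarrow> nat) \<Rightarrow> (nat \<Rightarrow> nat) \<Rightarrow> bool" where
  "cover n f g \<longleftrightarrow> (\<exists>j\<in>{1..n}. f j \<noteq> j \<and> g j = j \<and> (\<forall>k. k \<noteq> j \<longrightarrow> g k = f k))"

definition endo_le :: "nat \<Rightarrow> (nat \<Rightarrow> nat) \<Rightarrow> (nat \<Rightarrow> nat) \<Rightarrow> bool" where
  "endo_le n = (cover n)\<^sup>*\<^sup>*"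

definition Fix :: "nat \<Rightarrow> (nat \<Rightarrow> nat) \<Rightarrow> nat" where
  "Fix n f = card {j\<in>{1..n}. f j = j}"

definition R :: "nat \<Rightarrow> (nat \<Rightarrow> nat) \<Rightarrow> series" where
  "R n f = (\<lambda>w. \<Sum>g\<in>{g\<in>endo n. endo_le n g f}. (-1) ^ (Fix n f - Fix n g) * S n g w)"

definition fI :: "(nat \<Rightarrow> nat) \<Rightarrow> nat set \<Rightarrow> (nat \<Rightarrow> nat)" where
  "fI f I = restrict (\<lambda>x. if f x \<in> I then f x else x) I"

definition tau :: "nat set \<Rightarrow> nat \<Rightarrow> nat" where
  "tau I x = card {y\<in>I. y < x} + 1"

definition std :: "(nat \<Rightarrow> nat) \<Rightarrow> nat set \<Rightarrow> (nat \<Rightarrow> nat)" where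
  "std F I = restrict (\<lambda>k. tau I (F (inv_into I (tau I) k))) {1..card I}"

end

theory Submission
  imports Defs
begin

(* Proof idea.  Write N = [n1+n2] and, for a word w, let prec_ind w i j be 1
   if w_i \<prec> w_j and 0 otherwise.

   (1) The endofunctions g \<le> f are exactly those agreeing with f off the fixed
       points of f and arbitrary on them, so the order ideal below f is a
       product set.  Expanding R_f over it factorises column by column:
         R_f(w) = \<Prod>_j col_weight w [n] j (f j),
       where a non-fixed column contributes prec_ind w (f j) j and a fixed
       column j contributes 1 - \<Sum>_{i \<in> [n], i \<noteq> j} prec_ind w i j.
   (2) The endofunctions f of N whose two standardised restrictions are f1 and
       f2 again form a product set: f agrees with the shifted concatenation
       g = f1 \<bullet> f2 except at fixed points j of g, where f j may also lie in the
       other block.  Summing the weights of (1) over these choices replaces,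
       in a fixed column j, the ambient set N by the block containing j.
   (3) The product R_f1 R_f2 is concentrated at the factorisation w = u v with
       |u| = n1, and the block-wise column weights of (2) are exactly those of
       R_f1(u) and R_f2(v). *)

section \<open>The order ideal below an endofunction\<close>

(* Every cover step only turns a non-fixed point into a fixed point, so below
   f the values at non-fixed points of f are never changed. *)
lemma endo_le_agrees:
  assumes "endo_le n g f"
  shows "f j = j \<or> f j = g j"
  using assms unfolding endo_le_def
proof (induction rule: rtranclp_induct)
  case (step y z)
  then show ?case unfolding cover_def by metis
qed simp

(* Conversely, g \<le> f as soon as g agrees with f at every non-fixed point of f:
   fix the points where g and f differ one at a time. *)
lemma endo_le_if_agrees:
  assumes f: "f \<in> endo n" and g: "g \<in> endo n"
    and agree: "\<forall>j\<in>{1..n}. f j = j \<or> f j = g j"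
  shows "endo_le n g f"
  using g agree
proof (induction "card {j\<in>{1..n}. g j \<noteq> f j}" arbitrary: g)
  case 0
  then have "\<forall>j\<in>{1..n}. g j = f j" by auto
  then have "g = f" using "0.prems"(1) f unfolding endo_def
    by (intro extensionalityI[of _ "{1..n}"]) (auto simp: PiE_def)
  then show ?case unfolding endo_le_def by simp
next
  case (Suc m g)
  then obtain j where j: "j \<in> {1..n}" "g j \<noteq> f j"
    by (metis (mono_tags, lifting) card.empty empty_Collect_eq nat.distinct(1))
  have fj: "f j = j" using Suc.prems(2) j by auto
  define g' where "g' = g(j := j)"
  have cover: "cover n g g'" unfolding cover_def g'_def using j fj by auto
  have g': "g' \<in> endo n" using Suc.prems(1) j unfolding g'_def endo_def
    by (auto simp: PiE_iff extensional_def)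
  have "{i\<in>{1..n}. g' i \<noteq> f i} = {i\<in>{1..n}. g i \<noteq> f i} - {j}"
    unfolding g'_def using fj by auto
  then have "m = card {i\<in>{1..n}. g' i \<noteq> f i}" using Suc.hyps(2) j by simp
  moreover have "\<forall>i\<in>{1..n}. f i = i \<or> f i = g' i" using Suc.prems(2) fj unfolding g'_def by auto
  ultimately have "endo_le n g' f" using Suc.hyps(1) g' by blast
  then show ?case unfolding endo_le_def using cover by (meson converse_rtranclp_into_rtranclp)
qed

lemma order_ideal_PiE:
  assumes f: "f \<in> endo n"
  shows "{g\<in>endo n. endo_le n g f} = PiE {1..n} (\<lambda>j. if f j = j then {1..n} else {f j})"
proof (intro set_eqI iffI)
  fix g assume "g \<in> {g\<in>endo n. endo_le n g f}"
  then have "g \<in> endo n" and "\<forall>j. f j = j \<or> f j = g j" using endo_le_agrees by auto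
  then show "g \<in> PiE {1..n} (\<lambda>j. if f j = j then {1..n} else {f j})"
    unfolding endo_def PiE_iff by auto
next
  fix g assume g: "g \<in> PiE {1..n} (\<lambda>j. if f j = j then {1..n} else {f j})"
  then have "g \<in> endo n" using f unfolding endo_def by (auto simp: PiE_iff split: if_splits)
  moreover have "\<forall>j\<in>{1..n}. f j = j \<or> f j = g j" using g by (auto simp: PiE_iff split: if_splits)
  ultimately show "g \<in> {g\<in>endo n. endo_le n g f}" using endo_le_if_agrees f by blast
qed

section \<open>Column factorisation of R\<close>

definition prec_ind :: "(nat \<times> nat) list \<Rightarrow> nat \<Rightarrow> nat \<Rightarrow> int" where
  "prec_ind w i j = (if prec (w ! (i - 1)) (w ! (j - 1)) then 1 else 0)"

definition col_weight :: "(nat \<times> nat) list \<Rightarrow> nat set \<Rightarrow> nat \<Rightarrow> nat \<Rightarrow> int" where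
  "col_weight w N j i = (if i = j then 1 - (\<Sum>i'\<in>N - {j}. prec_ind w i' j) else prec_ind w i j)"

lemma prod_indicator:
  "finite A \<Longrightarrow> (\<Prod>j\<in>A. if Q j then 1 else 0 :: int) = (if \<forall>j\<in>A. Q j then 1 else 0)"
  by (induction A rule: finite_induct) auto

lemma S_product:
  assumes "length w = n" and "set w \<subseteq> letters"
  shows "S n g w = (\<Prod>j\<in>{1..n}. if g j = j then 1 else prec_ind w (g j) j)"
proof -
  have "S n g w = (if \<forall>j\<in>{1..n}. g j \<noteq> j \<longrightarrow> prec (w ! (g j - 1)) (w ! (j - 1)) then 1 else 0)"
    unfolding S_def using assms by simp
  also have "\<dots> = (\<Prod>j\<in>{1..n}. if g j \<noteq> j \<longrightarrow> prec (w ! (g j - 1)) (w ! (j - 1)) then 1 else 0)"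
    by (rule prod_indicator[symmetric]) simp
  also have "\<dots> = (\<Prod>j\<in>{1..n}. if g j = j then 1 else prec_ind w (g j) j)"
    by (rule prod.cong) (auto simp: prec_ind_def)
  finally show ?thesis .
qed

lemma sign_product:
  assumes "{j\<in>{1..n}. g j = j} \<subseteq> {j\<in>{1..n}. f j = j}"
  shows "(-1::int) ^ (Fix n f - Fix n g) = (\<Prod>j\<in>{1..n}. if f j = j \<and> g j \<noteq> j then -1 else 1)"
proof -
  have "Fix n f - Fix n g = card ({j\<in>{1..n}. f j = j} - {j\<in>{1..n}. g j = j})"
    unfolding Fix_def using assms by (simp add: card_Diff_subset finite_subset)
  also have "{j\<in>{1..n}. f j = j} - {j\<in>{1..n}. g j = j} = {j\<in>{1..n}. f j = j \<and> g j \<noteq> j}"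
    by auto
  finally have "(-1::int) ^ (Fix n f - Fix n g) = (\<Prod>j\<in>{j\<in>{1..n}. f j = j \<and> g j \<noteq> j}. -1)"
    by simp
  also have "\<dots> = (\<Prod>j\<in>{1..n}. if f j = j \<and> g j \<noteq> j then -1 else 1)"
    by (rule prod.inter_filter) simp
  finally show ?thesis .
qed

lemma column_sum_ideal:
  assumes j: "j \<in> {1..n}"
  shows "(\<Sum>i\<in>(if f j = j then {1..n} else {f j}).
            (if f j = j \<and> i \<noteq> j then -1 else 1) * (if i = j then 1 else prec_ind w i j))
         = col_weight w {1..n} j (f j)"
proof (cases "f j = j")
  case True
  have "(\<Sum>i\<in>{1..n}. (if i \<noteq> j then -1 else 1) * (if i = j then 1 else prec_ind w i j))
      = 1 + (\<Sum>i\<in>{1..n} - {j}. - prec_ind w i j)"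
    using j by (simp add: sum.remove)
  then show ?thesis using True by (simp add: col_weight_def sum_negf)
qed (simp add: col_weight_def)

lemma R_product:
  assumes f: "f \<in> endo n"
  shows "R n f w = (if length w = n \<and> set w \<subseteq> letters
                    then \<Prod>j\<in>{1..n}. col_weight w {1..n} j (f j) else 0)"
proof -
  define B where "B = (\<lambda>j. if f j = j then {1..n} else {f j})"
  have R_sum: "R n f w = (\<Sum>g\<in>PiE {1..n} B. (-1) ^ (Fix n f - Fix n g) * S n g w)"
    unfolding R_def order_ideal_PiE[OF f] B_def ..
  show ?thesis
  proof (cases "length w = n \<and> set w \<subseteq> letters")
    case False
    then have "S n g w = 0" for g unfolding S_def by auto
    then have "R n f w = 0" unfolding R_sum by simp
    with False show ?thesis by (simp only: if_False)
  next
    case admissible: True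
    define d where "d = (\<lambda>j i. (if f j = j \<and> i \<noteq> j then -1 else 1) * (if i = j then 1 else prec_ind w i j))"
    have summand: "(-1) ^ (Fix n f - Fix n g) * S n g w = (\<Prod>j\<in>{1..n}. d j (g j))"
      if g: "g \<in> PiE {1..n} B" for g
    proof -
      have fixed_points: "{j\<in>{1..n}. g j = j} \<subseteq> {j\<in>{1..n}. f j = j}"
        using g unfolding B_def by (auto simp: PiE_iff split: if_splits)
      show ?thesis
        unfolding sign_product[OF fixed_points] S_product[OF conjunct1[OF admissible] conjunct2[OF admissible]]
          d_def prod.distrib[symmetric] ..
    qed
    have "R n f w = (\<Sum>g\<in>PiE {1..n} B. \<Prod>j\<in>{1..n}. d j (g j))"
      unfolding R_sum by (rule sum.cong) (auto simp: summand)
    also have "\<dots> = (\<Prod>j\<in>{1..n}. \<Sum>i\<in>B j. d j i)"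
      by (rule prod_sum_PiE[symmetric]) (auto simp: B_def)
    also have "\<dots> = (\<Prod>j\<in>{1..n}. col_weight w {1..n} j (f j))"
      unfolding B_def d_def by (rule prod.cong) (simp_all add: column_sum_ideal)
    finally show ?thesis using admissible by simp
  qed
qed

section \<open>The fibre of the two standardised restrictions\<close>

lemma tau_interval:
  assumes "x \<in> {a+1..a+m}"
  shows "tau {a+1..a+m} x = x - a"
proof -
  have "{y\<in>{a+1..a+m}. y < x} = {a+1..<x}" using assms by auto
  then show ?thesis unfolding tau_def using assms by (simp add: Suc_diff_Suc)
qed

lemma inv_tau_interval:
  assumes "k \<in> {1..m}"
  shows "inv_into {a+1..a+m} (tau {a+1..a+m}) k = k + a"
proof (rule inv_into_f_eq)
  show "inj_on (tau {a+1..a+m}) {a+1..a+m}"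
  proof (rule inj_onI)
    fix x y assume x: "x \<in> {a+1..a+m}" and y: "y \<in> {a+1..a+m}"
      and "tau {a+1..a+m} x = tau {a+1..a+m} y"
    then have "x - a = y - a" by (simp only: tau_interval)
    with x y show "x = y" by auto
  qed
  show "k + a \<in> {a+1..a+m}" using assms by auto
  show "tau {a+1..a+m} (k + a) = k" using assms by (subst tau_interval) auto
qed

lemma std_interval:
  "std (fI f {a+1..a+m}) {a+1..a+m} =
     restrict (\<lambda>k. (if f (k+a) \<in> {a+1..a+m} then f (k+a) else k+a) - a) {1..m}"
proof (rule ext)
  fix k
  show "std (fI f {a+1..a+m}) {a+1..a+m} k =
     restrict (\<lambda>k. (if f (k+a) \<in> {a+1..a+m} then f (k+a) else k+a) - a) {1..m} k"
  proof (cases "k \<in> {1..m}")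
    case True
    then have ka: "k + a \<in> {a+1..a+m}" by auto
    have "std (fI f {a+1..a+m}) {a+1..a+m} k = tau {a+1..a+m} (fI f {a+1..a+m} (k+a))"
      unfolding std_def using True inv_tau_interval[OF True] by simp
    also have "\<dots> = fI f {a+1..a+m} (k+a) - a"
      by (rule tau_interval) (use ka in \<open>auto simp: fI_def\<close>)
    finally show ?thesis using True ka unfolding fI_def by simp
  next
    case False
    then show ?thesis unfolding std_def restrict_def by auto
  qed
qed

definition concat_endo :: "nat \<Rightarrow> (nat \<Rightarrow> nat) \<Rightarrow> (nat \<Rightarrow> nat) \<Rightarrow> nat \<Rightarrow> nat" where
  "concat_endo n1 f1 f2 j = (if j \<le> n1 then f1 j else f2 (j - n1) + n1)"

definition block :: "nat \<Rightarrow> nat \<Rightarrow> nat \<Rightarrow> nat set" where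
  "block n1 n j = (if j \<le> n1 then {1..n1} else {n1+1..n})"

(* Admissible values at j of a function in the fibre over g = f1 \<bullet> f2:
   the value g j, or, at a fixed point of g, any position of the other block. *)
definition fibre_choices :: "nat \<Rightarrow> nat \<Rightarrow> (nat \<Rightarrow> nat) \<Rightarrow> nat \<Rightarrow> nat set" where
  "fibre_choices n1 n g j = (if g j = j then insert j ({1..n} - block n1 n j) else {g j})"

lemma ball_interval_split:
  "(\<forall>j\<in>{1..a+b}. Q j) \<longleftrightarrow> (\<forall>j\<in>{1..a}. Q j) \<and> (\<forall>k\<in>{1..b::nat}. Q (k + a))"
proof -
  have "(\<lambda>k. k + a) ` {1..b} = {a+1..a+b}"
    using image_add_atLeastAtMost[of a 1 b] by (simp add: add.commute)
  then have "{1..a+b} = {1..a} \<union> (\<lambda>k. k + a) ` {1..b}" by auto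
  then show ?thesis by blast
qed

lemma prod_interval_split:
  "(\<Prod>j\<in>{1..a+b}. h j) = (\<Prod>j\<in>{1..a}. h j) * (\<Prod>k\<in>{1..b::nat}. h (k + a))"
  using prod.ub_add_nat[of 1 a h b] prod.shift_bounds_cl_nat_ivl[of h 1 a b]
  by (simp add: add.commute)

lemma fibre_PiE:
  assumes f1: "f1 \<in> endo n1" and f2: "f2 \<in> endo n2"
  shows "{f\<in>endo (n1 + n2).
            std (fI f {1..n1}) {1..n1} = f1 \<and>
            std (fI f ({1..n1 + n2} - {1..n1})) ({1..n1 + n2} - {1..n1}) = f2}
       = PiE {1..n1+n2} (fibre_choices n1 (n1+n2) (concat_endo n1 f1 f2))"
    (is "?fibre = PiE _ ?C")
proof -
  have second_block: "{1..n1 + n2} - {1..n1} = {n1+1..n1+n2}" by auto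
  have std1: "std (fI f {1..n1}) {1..n1} =
      restrict (\<lambda>k. if f k \<in> {1..n1} then f k else k) {1..n1}" for f
    using std_interval[of f 0 n1] unfolding add_0 add_0_right diff_zero .
  have std2: "std (fI f {n1+1..n1+n2}) {n1+1..n1+n2} =
      restrict (\<lambda>k. (if f (k+n1) \<in> {n1+1..n1+n2} then f (k+n1) else k+n1) - n1) {1..n2}" for f
    using std_interval[of f n1 n2] .
  have restrict_eq: "g \<in> extensional A \<Longrightarrow> restrict h A = g \<longleftrightarrow> (\<forall>k\<in>A. h k = g k)" for g h A
    by (metis extensionalityI restrict_apply' restrict_extensional)
  have ext1: "f1 \<in> extensional {1..n1}" and ext2: "f2 \<in> extensional {1..n2}"
    using f1 f2 unfolding endo_def PiE_def by auto
  have choice1: "(f j \<in> {1..n1+n2} \<and> (if f j \<in> {1..n1} then f j else j) = f1 j) \<longleftrightarrow> f j \<in> ?C j"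
    if j: "j \<in> {1..n1}" for f j
    using j f1 unfolding fibre_choices_def concat_endo_def block_def endo_def by auto
  have choice2: "(f (k+n1) \<in> {1..n1+n2} \<and>
        (if f (k+n1) \<in> {n1+1..n1+n2} then f (k+n1) else k+n1) - n1 = f2 k)
      \<longleftrightarrow> f (k+n1) \<in> ?C (k+n1)"
    if k: "k \<in> {1..n2}" for f k
    using k f2 unfolding fibre_choices_def concat_endo_def block_def endo_def by auto
  show ?thesis
  proof (intro set_eqI)
    fix f
    have "f \<in> ?fibre \<longleftrightarrow> f \<in> extensional {1..n1+n2} \<and> (\<forall>j\<in>{1..n1+n2}. f j \<in> {1..n1+n2}) \<and>
          (\<forall>j\<in>{1..n1}. (if f j \<in> {1..n1} then f j else j) = f1 j) \<and>
          (\<forall>k\<in>{1..n2}. (if f (k+n1) \<in> {n1+1..n1+n2} then f (k+n1) else k+n1) - n1 = f2 k)"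
      unfolding second_block std1 std2 restrict_eq[OF ext1] restrict_eq[OF ext2] endo_def
      by (auto simp: PiE_iff)
    also have "\<dots> \<longleftrightarrow> f \<in> extensional {1..n1+n2} \<and> (\<forall>j\<in>{1..n1}. f j \<in> ?C j) \<and>
          (\<forall>k\<in>{1..n2}. f (k+n1) \<in> ?C (k+n1))"
      using choice1[of _ f] choice2[of _ f] ball_interval_split[of n1 n2 "\<lambda>j. f j \<in> {1..n1+n2}"]
      by blast
    also have "\<dots> \<longleftrightarrow> f \<in> PiE {1..n1+n2} ?C"
      using ball_interval_split[of n1 n2 "\<lambda>j. f j \<in> ?C j"] by (auto simp: PiE_iff)
    finally show "f \<in> ?fibre \<longleftrightarrow> f \<in> PiE {1..n1+n2} ?C" .
  qed
qed

(* Summing the weights of column j over the values allowed in the fibre: at a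
   fixed point, the diagonal weight relative to N together with the edge
   weights from N - J is the diagonal weight relative to the block J. *)
lemma column_sum_block:
  assumes "finite N" and "J \<subseteq> N" and "j \<in> J"
  shows "(\<Sum>i\<in>(if g j = j then insert j (N - J) else {g j}). col_weight w N j i)
         = col_weight w J j (g j)"
proof (cases "g j = j")
  case True
  have split: "N - {j} = (J - {j}) \<union> (N - J)" using assms by auto
  have "(\<Sum>i\<in>N - {j}. prec_ind w i j) = (\<Sum>i\<in>J - {j}. prec_ind w i j) + (\<Sum>i\<in>N - J. prec_ind w i j)"
    unfolding split using assms by (intro sum.union_disjoint) (auto intro: finite_subset)
  moreover have "(\<Sum>i\<in>N - J. col_weight w N j i) = (\<Sum>i\<in>N - J. prec_ind w i j)"
    using assms by (intro sum.cong) (auto simp: col_weight_def)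
  ultimately show ?thesis using True assms by (simp add: col_weight_def)
qed (simp add: col_weight_def)

lemma col_weight_take:
  assumes "j \<in> {1..m}" and "i \<in> {1..m}"
  shows "col_weight (take m w) {1..m} j i = col_weight w {1..m} j i"
proof -
  have "prec_ind (take m w) i' j' = prec_ind w i' j'" if "i' \<in> {1..m}" "j' \<in> {1..m}" for i' j'
  proof -
    have "i' - 1 < m" "j' - 1 < m" using that by auto
    then show ?thesis by (simp add: prec_ind_def)
  qed
  then show ?thesis using assms unfolding col_weight_def by (auto intro: sum.cong)
qed

lemma col_weight_drop:
  assumes "a \<le> length w" and "k \<in> {1..m}" and "i \<in> {1..m}"
  shows "col_weight (drop a w) {1..m} k i = col_weight w {a+1..a+m} (k+a) (i+a)"
proof -
  have shift: "prec_ind (drop a w) i' k' = prec_ind w (i'+a) (k'+a)" if "i' \<ge> 1" "k' \<ge> 1" for i' k'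
  proof -
    have "i' + a - 1 = a + (i' - 1)" "k' + a - 1 = a + (k' - 1)" using that by auto
    then show ?thesis using assms(1) by (simp add: prec_ind_def)
  qed
  have "{a+1..a+m} - {k+a} = (\<lambda>i'. i' + a) ` ({1..m} - {k})"
  proof -
    have "(\<lambda>i'. i' + a) ` {1..m} = {a+1..a+m}"
      using image_add_atLeastAtMost[of a 1 m] by (simp add: add.commute)
    moreover have "(\<lambda>i'. i' + a) ` ({1..m} - {k}) = (\<lambda>i'. i' + a) ` {1..m} - {k+a}"
      by (simp add: image_set_diff)
    ultimately show ?thesis by (simp add: add.commute)
  qed
  then have "(\<Sum>i'\<in>{a+1..a+m} - {k+a}. prec_ind w i' (k+a)) = (\<Sum>i'\<in>{1..m} - {k}. prec_ind w (i'+a) (k+a))"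
    by (simp add: sum.reindex)
  also have "\<dots> = (\<Sum>i'\<in>{1..m} - {k}. prec_ind (drop a w) i' k)"
    using assms(2) by (intro sum.cong) (auto simp: shift)
  finally show ?thesis using assms(2,3) unfolding col_weight_def by (simp add: shift)
qed

section \<open>Both sides as products of column weights\<close>

(* Right-hand side: by (1) and (2) the sum over the fibre is a product of
   sums over the choice sets, i.e. of block-relative column weights. *)
lemma fibre_sum_R:
  assumes f1: "f1 \<in> endo n1" and f2: "f2 \<in> endo n2"
  defines "g \<equiv> concat_endo n1 f1 f2"
  shows "(\<Sum>f\<in>{f\<in>endo (n1 + n2).
            std (fI f {1..n1}) {1..n1} = f1 \<and>
            std (fI f ({1..n1 + n2} - {1..n1})) ({1..n1 + n2} - {1..n1}) = f2}.
          R (n1 + n2) f w)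
       = (if length w = n1 + n2 \<and> set w \<subseteq> letters
          then \<Prod>j\<in>{1..n1+n2}. col_weight w (block n1 (n1+n2) j) j (g j) else 0)"
proof -
  let ?N = "{1..n1+n2}" and ?C = "fibre_choices n1 (n1+n2) g"
  have fibre: "{f\<in>endo (n1 + n2).
            std (fI f {1..n1}) {1..n1} = f1 \<and>
            std (fI f ({1..n1 + n2} - {1..n1})) ({1..n1 + n2} - {1..n1}) = f2} = PiE ?N ?C"
    unfolding g_def by (rule fibre_PiE[OF f1 f2])
  have R_f: "R (n1 + n2) f w = (if length w = n1 + n2 \<and> set w \<subseteq> letters
                    then \<Prod>j\<in>?N. col_weight w ?N j (f j) else 0)" if "f \<in> PiE ?N ?C" for f
    using that fibre by (intro R_product) blast
  show ?thesis
  proof (cases "length w = n1 + n2 \<and> set w \<subseteq> letters")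
    case admissible: True
    have "(\<Sum>f\<in>PiE ?N ?C. R (n1 + n2) f w) = (\<Sum>f\<in>PiE ?N ?C. \<Prod>j\<in>?N. col_weight w ?N j (f j))"
      using admissible by (intro sum.cong) (simp_all add: R_f)
    also have "\<dots> = (\<Prod>j\<in>?N. \<Sum>i\<in>?C j. col_weight w ?N j i)"
      by (rule prod_sum_PiE[symmetric]) (auto simp: fibre_choices_def)
    also have "\<dots> = (\<Prod>j\<in>?N. col_weight w (block n1 (n1+n2) j) j (g j))"
      unfolding fibre_choices_def
      by (intro prod.cong refl column_sum_block) (auto simp: block_def)
    finally show ?thesis unfolding fibre using admissible by simp
  next
    case False
    then have "(\<Sum>f\<in>PiE ?N ?C. R (n1 + n2) f w) = 0"
      using R_f by (intro sum.neutral) auto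
    then show ?thesis unfolding fibre if_not_P[OF False] .
  qed
qed

lemma ser_mult_concentrated:
  assumes F: "\<And>u. length u \<noteq> n1 \<Longrightarrow> F u = 0" and G: "\<And>v. length v \<noteq> n2 \<Longrightarrow> G v = 0"
  shows "ser_mult F G w = (if length w = n1 + n2 then F (take n1 w) * G (drop n1 w) else 0)"
proof -
  have zero: "F (take i w) * G (drop i w) = 0" if "i \<le> length w" "i \<noteq> n1 \<or> length w \<noteq> n1 + n2" for i
    using that F G by (cases "i = n1") auto
  show ?thesis
  proof (cases "length w = n1 + n2")
    case True
    then have "ser_mult F G w = F (take n1 w) * G (drop n1 w) + (\<Sum>i\<in>{..length w} - {n1}. F (take i w) * G (drop i w))"
      unfolding ser_mult_def by (intro sum.remove) auto
    also have "(\<Sum>i\<in>{..length w} - {n1}. F (take i w) * G (drop i w)) = 0"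
      using zero by (intro sum.neutral) auto
    finally show ?thesis using True by simp
  qed (simp add: ser_mult_def zero)
qed

lemma ser_mult_R:
  assumes f1: "f1 \<in> endo n1" and f2: "f2 \<in> endo n2"
  shows "ser_mult (R n1 f1) (R n2 f2) w =
    (if length w = n1 + n2 \<and> set w \<subseteq> letters
     then (\<Prod>j\<in>{1..n1}. col_weight (take n1 w) {1..n1} j (f1 j)) *
          (\<Prod>k\<in>{1..n2}. col_weight (drop n1 w) {1..n2} k (f2 k))
     else 0)"
proof -
  have "set w \<subseteq> letters \<longleftrightarrow> set (take n1 w) \<subseteq> letters \<and> set (drop n1 w) \<subseteq> letters"
    by (metis append_take_drop_id le_sup_iff set_append)
  then show ?thesis
    by (subst ser_mult_concentrated[of n1 _ n2]) (auto simp: R_product[OF f1] R_product[OF f2])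
qed

lemma block_weights_split:
  assumes f1: "f1 \<in> endo n1" and f2: "f2 \<in> endo n2" and len: "length w = n1 + n2"
  shows "(\<Prod>j\<in>{1..n1+n2}. col_weight w (block n1 (n1+n2) j) j (concat_endo n1 f1 f2 j)) =
         (\<Prod>j\<in>{1..n1}. col_weight (take n1 w) {1..n1} j (f1 j)) *
         (\<Prod>k\<in>{1..n2}. col_weight (drop n1 w) {1..n2} k (f2 k))"
  unfolding prod_interval_split
proof (intro arg_cong2[where f = "(*)"] prod.cong refl)
  fix j assume j: "j \<in> {1..n1}"
  moreover have "f1 j \<in> {1..n1}" using f1 j by (auto simp: endo_def)
  ultimately have "col_weight (take n1 w) {1..n1} j (f1 j) = col_weight w {1..n1} j (f1 j)"
    by (rule col_weight_take)
  then show "col_weight w (block n1 (n1+n2) j) j (concat_endo n1 f1 f2 j) =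
             col_weight (take n1 w) {1..n1} j (f1 j)"
    using j by (simp add: block_def concat_endo_def)
next
  fix k assume k: "k \<in> {1..n2}"
  moreover have "f2 k \<in> {1..n2}" using f2 k by (auto simp: endo_def)
  ultimately have "col_weight (drop n1 w) {1..n2} k (f2 k) =
                   col_weight w {n1+1..n1+n2} (k+n1) (f2 k + n1)"
    using len by (intro col_weight_drop) auto
  then show "col_weight w (block n1 (n1+n2) (k+n1)) (k+n1) (concat_endo n1 f1 f2 (k+n1)) =
             col_weight (drop n1 w) {1..n2} k (f2 k)"
    using k by (simp add: block_def concat_endo_def)
qed

theorem mainTheorem16:
  fixes f1 f2 :: "nat \<Rightarrow> nat" and n1 n2 :: nat
  assumes "f1 \<in> endo n1" and "f2 \<in> endo n2"
  shows "ser_mult (R n1 f1) (R n2 f2) =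
    (\<lambda>w. \<Sum>f\<in>{f\<in>endo (n1 + n2).
            std (fI f {1..n1}) {1..n1} = f1 \<and>
            std (fI f ({1..n1 + n2} - {1..n1})) ({1..n1 + n2} - {1..n1}) = f2}.
          R (n1 + n2) f w)"
proof (rule ext)
  fix w
  show "ser_mult (R n1 f1) (R n2 f2) w = (\<Sum>f\<in>{f\<in>endo (n1 + n2).
            std (fI f {1..n1}) {1..n1} = f1 \<and>
            std (fI f ({1..n1 + n2} - {1..n1})) ({1..n1 + n2} - {1..n1}) = f2}.
          R (n1 + n2) f w)"
    unfolding ser_mult_R[OF assms] fibre_sum_R[OF assms] using block_weights_split[OF assms]
    by simp
qed

end
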